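(* Let $R$ be a ring and $\mathfrak a\in\mathrm{Ass}(R)$. Then: (1) $\mathrm{Den}(R,\mathfrak a)$ is an ordered abelian semigroup under $S_1S_2:=\langle S_1,S_2\rangle$ (the multiplicative subsemigroup of $R$ generated by $S_1,S_2$): for $S_1,S_2,S_3\in\mathrm{Den}(R,\mathfrak a)$, $S_1S_2\in\mathrm{Den}(R,\mathfrak a)$, $S_1S_2=S_2S_1$, and $S_1\subseteq S_2$ implies $S_1S_3\subseteq S_2S_3$; (2) $S_{\mathfrak a}(R):=\bigcup_{S\in\mathrm{Den}(R,\mathfrak a)}S$ belongs to $\mathrm{Den}(R,\mathfrak a)$ and is its largest element; (3) for any non-empty family $S_i\in\mathrm{Den}(R,\mathfrak a)$, $i\in I$, the set $\langle S_i\mid i\in I\rangle:=\bigcup_{\emptyset\ne J\subseteq I,|J|<\infty}\prod_{j\in J}S_j$ belongs to $\mathrm{Den}(R,\mathfrak a)$ and is the least upper bound of $\{S_i\}_{i\in I}$ in $\mathrm{Den}(R,\mathfrak a)$.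
   Context: Rings are associative with $1$. A multiplicatively closed subset $S$ ($1\in S$, $0\notin S$) is a left (resp. right) Ore set if $Sr\cap Rs\neq\emptyset$ (resp. $rS\cap sR\neq\emptyset$) for all $r\in R,s\in S$. A left denominator set is a left Ore set $S$ such that $rs=0$ ($s\in S$) implies $tr=0$ for some $t\in S$; a right denominator set is defined symmetrically. $\mathrm{Den}(R)$ is the set of subsets that are both left and right denominator sets; for $S\in\mathrm{Den}(R)$, $\mathrm{ass}(S):=\{r\mid sr=0\text{ for some }s\in S\}=\{r\mid rs=0\text{ for some }s\in S\}$. $\mathrm{Ass}(R):=\{\mathrm{ass}(S)\mid S\in\mathrm{Den}(R)\}$ and $\mathrm{Den}(R,\mathfrak a):=\{S\in\mathrm{Den}(R)\mid\mathrm{ass}(S)=\mathfrak a\}$. *)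

theory Defs
  imports Main
begin

definition mult_closed :: "'a::ring_1 set \<Rightarrow> bool" where
  "mult_closed S \<longleftrightarrow> 1 \<in> S \<and> 0 \<notin> S \<and> (\<forall>s\<in>S. \<forall>t\<in>S. s * t \<in> S)"

definition left_ore :: "'a::ring_1 set \<Rightarrow> bool" where
  "left_ore S \<longleftrightarrow> mult_closed S \<and>
     (\<forall>r. \<forall>s\<in>S. \<exists>s'\<in>S. \<exists>r'. s' * r = r' * s)"

definition right_ore :: "'a::ring_1 set \<Rightarrow> bool" where
  "right_ore S \<longleftrightarrow> mult_closed S \<and>
     (\<forall>r. \<forall>s\<in>S. \<exists>s'\<in>S. \<exists>r'. r * s' = s * r')"

definition left_den :: "'a::ring_1 set \<Rightarrow> bool" where
  "left_den S \<longleftrightarrow> left_ore S \<and>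
     (\<forall>r. \<forall>s\<in>S. r * s = 0 \<longrightarrow> (\<exists>t\<in>S. t * r = 0))"

definition right_den :: "'a::ring_1 set \<Rightarrow> bool" where
  "right_den S \<longleftrightarrow> right_ore S \<and>
     (\<forall>r. \<forall>s\<in>S. s * r = 0 \<longrightarrow> (\<exists>t\<in>S. r * t = 0))"

definition Den :: "'a::ring_1 set set" where
  "Den = {S. left_den S \<and> right_den S}"

definition ass :: "'a::ring_1 set \<Rightarrow> 'a set" where
  "ass S = {r. \<exists>s\<in>S. s * r = 0}"

definition Ass :: "'a::ring_1 set set" where
  "Ass = ass ` Den"

definition Den_at :: "'a::ring_1 set \<Rightarrow> 'a set set" where
  "Den_at \<aa> = {S \<in> Den. ass S = \<aa>}"

inductive_set sgen :: "'a::ring_1 set \<Rightarrow> 'a set" for X where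
  base: "x \<in> X \<Longrightarrow> x \<in> sgen X"
| mult: "x \<in> sgen X \<Longrightarrow> y \<in> sgen X \<Longrightarrow> x * y \<in> sgen X"

definition den_prod :: "'a::ring_1 set \<Rightarrow> 'a set \<Rightarrow> 'a set" where
  "den_prod S1 S2 = sgen (S1 \<union> S2)"

definition S_max :: "'a::ring_1 set \<Rightarrow> 'a set" where
  "S_max \<aa> = \<Union> (Den_at \<aa>)"

definition fam_gen :: "'i set \<Rightarrow> ('i \<Rightarrow> 'a::ring_1 set) \<Rightarrow> 'a set" where
  "fam_gen I S = sgen (\<Union>i\<in>I. S i)"

end

theory Submission
  imports Defs
begin

text \<open>
  Fix \<open>S\<^sub>0 \<in> Den(R, \<aa>)\<close>. If \<open>s r \<in> \<aa>\<close> or \<open>r s \<in> \<aa>\<close> for some \<open>s \<in> S\<^sub>0\<close>, then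
  already \<open>r \<in> \<aa>\<close>. Hence the property ``\<open>t\<close> annihilates (on a fixed side) only elements
  of \<open>\<aa>\<close>'' passes from generators to products: \<open>x y r = 0\<close> gives \<open>y r \<in> \<aa>\<close>, so
  \<open>y r s = 0\<close> for some \<open>s \<in> S\<^sub>0\<close>, so \<open>r s \<in> \<aa>\<close> and \<open>r \<in> \<aa>\<close>. Together with the Ore
  conditions, which pass to products by composing witnesses, this shows that the semigroup
  generated by any non-empty union of members of \<open>Den(R, \<aa>)\<close> is again in \<open>Den(R, \<aa>)\<close>;
  all three parts are instances of this, plus minimality of the generated semigroup.
\<close>

lemma sgen_least:
  assumes "X \<subseteq> Y" and "\<And>x y. x \<in> Y \<Longrightarrow> y \<in> Y \<Longrightarrow> x * y \<in> Y"
  shows "sgen X \<subseteq> Y"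
proof
  fix z assume "z \<in> sgen X"
  then show "z \<in> Y" by induction (use assms in auto)
qed

lemma subset_sgen: "X \<subseteq> sgen X"
  by (auto intro: sgen.base)

lemma sgen_mono: "X \<subseteq> Y \<Longrightarrow> sgen X \<subseteq> sgen Y"
  by (rule sgen_least) (auto intro: sgen.intros)

lemma sgen_sgen_Un: "sgen (sgen A \<union> B) = sgen (A \<union> B)"
proof
  show "sgen (sgen A \<union> B) \<subseteq> sgen (A \<union> B)"
    using sgen_mono[of A "A \<union> B"] by (intro sgen_least) (auto intro: sgen.intros)
  show "sgen (A \<union> B) \<subseteq> sgen (sgen A \<union> B)"
    using subset_sgen[of A] by (intro sgen_mono) auto
qed

lemma sgen_left_ore:
  assumes "\<And>x r. x \<in> X \<Longrightarrow> \<exists>s\<in>sgen X. \<exists>r'. s * r = r' * x"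
    and "t \<in> sgen X"
  shows "\<exists>s\<in>sgen X. \<exists>r'. s * r = r' * t"
  using assms(2)
proof (induction arbitrary: r)
  case (base x)
  then show ?case using assms(1) by blast
next
  case (mult x y)
  obtain s2 r2 where "s2 \<in> sgen X" "s2 * r = r2 * y" using mult.IH(2) by blast
  moreover obtain s1 r1 where "s1 \<in> sgen X" "s1 * r2 = r1 * x" using mult.IH(1) by blast
  ultimately have "s1 * s2 \<in> sgen X" "(s1 * s2) * r = r1 * (x * y)"
    by (auto intro: sgen.mult) (metis mult.assoc)
  then show ?case by blast
qed

lemma sgen_right_ore:
  assumes "\<And>x r. x \<in> X \<Longrightarrow> \<exists>s\<in>sgen X. \<exists>r'. r * s = x * r'"
    and "t \<in> sgen X"
  shows "\<exists>s\<in>sgen X. \<exists>r'. r * s = t * r'"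
  using assms(2)
proof (induction arbitrary: r)
  case (base x)
  then show ?case using assms(1) by blast
next
  case (mult x y)
  obtain s1 r1 where "s1 \<in> sgen X" "r * s1 = x * r1" using mult.IH(1) by blast
  moreover obtain s2 r2 where "s2 \<in> sgen X" "r1 * s2 = y * r2" using mult.IH(2) by blast
  ultimately have "s1 * s2 \<in> sgen X" "r * (s1 * s2) = (x * y) * r2"
    by (auto intro: sgen.mult) (metis mult.assoc)
  then show ?case by blast
qed

lemma Den_at_mult_closed: "S \<in> Den_at \<aa> \<Longrightarrow> mult_closed S"
  by (auto simp: Den_at_def Den_def left_den_def left_ore_def)

lemma Den_at_mult: "S \<in> Den_at \<aa> \<Longrightarrow> s \<in> S \<Longrightarrow> t \<in> S \<Longrightarrow> s * t \<in> S"
  using Den_at_mult_closed by (auto simp: mult_closed_def)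

lemma Den_at_left_ore: "S \<in> Den_at \<aa> \<Longrightarrow> left_ore S"
  by (auto simp: Den_at_def Den_def left_den_def)

lemma Den_at_right_ore: "S \<in> Den_at \<aa> \<Longrightarrow> right_ore S"
  by (auto simp: Den_at_def Den_def right_den_def)

lemma Den_at_ass_iff_left:
  assumes "S \<in> Den_at \<aa>"
  shows "r \<in> \<aa> \<longleftrightarrow> (\<exists>s\<in>S. s * r = 0)"
  using assms by (auto simp: Den_at_def ass_def)

lemma Den_at_ass_iff_right:
  assumes "S \<in> Den_at \<aa>"
  shows "r \<in> \<aa> \<longleftrightarrow> (\<exists>s\<in>S. r * s = 0)"
proof -
  have D: "left_den S" "right_den S" "ass S = \<aa>"
    using assms by (auto simp: Den_at_def Den_def)
  show ?thesis
  proof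
    assume "r \<in> \<aa>"
    then obtain s where "s \<in> S" "s * r = 0" using D(3) by (auto simp: ass_def)
    then show "\<exists>s\<in>S. r * s = 0" using D(2) by (auto simp: right_den_def)
  next
    assume "\<exists>s\<in>S. r * s = 0"
    then obtain s where "s \<in> S" "r * s = 0" by blast
    then obtain t where "t \<in> S" "t * r = 0" using D(1) by (auto simp: left_den_def)
    then show "r \<in> \<aa>" using D(3) by (auto simp: ass_def)
  qed
qed

lemma Den_at_ass_cancel_left:
  assumes "S \<in> Den_at \<aa>" "s \<in> S" "s * r \<in> \<aa>"
  shows "r \<in> \<aa>"
proof -
  obtain s' where "s' \<in> S" "s' * (s * r) = 0"
    using assms Den_at_ass_iff_left by blast
  moreover have "s' * s \<in> S" using \<open>s' \<in> S\<close> assms(1,2) Den_at_mult by blast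
  ultimately show ?thesis using assms(1) Den_at_ass_iff_left by (metis mult.assoc)
qed

lemma Den_at_ass_cancel_right:
  assumes "S \<in> Den_at \<aa>" "s \<in> S" "r * s \<in> \<aa>"
  shows "r \<in> \<aa>"
proof -
  obtain s' where "s' \<in> S" "r * s * s' = 0"
    using assms Den_at_ass_iff_right by blast
  moreover have "s * s' \<in> S" using \<open>s' \<in> S\<close> assms(1,2) Den_at_mult by blast
  ultimately show ?thesis using assms(1) Den_at_ass_iff_right by (metis mult.assoc)
qed

lemma sgen_left_annihilator:
  assumes "S\<^sub>0 \<in> Den_at \<aa>"
    and "\<And>x r. x \<in> X \<Longrightarrow> x * r = 0 \<Longrightarrow> r \<in> \<aa>"
    and "t \<in> sgen X" "t * r = 0"
  shows "r \<in> \<aa>"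
  using assms(3,4)
proof (induction arbitrary: r)
  case (base x)
  then show ?case using assms(2) by blast
next
  case (mult x y)
  have "y * r \<in> \<aa>" using mult.IH(1) mult.prems by (simp add: mult.assoc)
  then obtain s where s: "s \<in> S\<^sub>0" "y * (r * s) = 0"
    using assms(1) Den_at_ass_iff_right by (metis mult.assoc)
  have "r * s \<in> \<aa>" using s(2) by (rule mult.IH(2))
  then show ?case by (rule Den_at_ass_cancel_right[OF assms(1) s(1)])
qed

lemma sgen_right_annihilator:
  assumes "S\<^sub>0 \<in> Den_at \<aa>"
    and "\<And>x r. x \<in> X \<Longrightarrow> r * x = 0 \<Longrightarrow> r \<in> \<aa>"
    and "t \<in> sgen X" "r * t = 0"
  shows "r \<in> \<aa>"
  using assms(3,4)
proof (induction arbitrary: r)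
  case (base x)
  then show ?case using assms(2) by blast
next
  case (mult x y)
  have "r * x \<in> \<aa>" using mult.IH(2) mult.prems by (simp add: mult.assoc)
  then obtain s where s: "s \<in> S\<^sub>0" "(s * r) * x = 0"
    using assms(1) Den_at_ass_iff_left by (metis mult.assoc)
  have "s * r \<in> \<aa>" using s(2) by (rule mult.IH(1))
  then show ?case by (rule Den_at_ass_cancel_left[OF assms(1) s(1)])
qed

lemma sgen_Union_left_ore:
  assumes "\<And>S. S \<in> F \<Longrightarrow> left_ore S" and "t \<in> sgen (\<Union>F)"
  shows "\<exists>s\<in>sgen (\<Union>F). \<exists>r'. s * r = r' * t"
proof (rule sgen_left_ore[OF _ assms(2)])
  fix x r assume "x \<in> \<Union>F"
  then obtain S where "S \<in> F" "x \<in> S" by blast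
  then obtain s r' where "s \<in> S" "s * r = r' * x"
    using assms(1) unfolding left_ore_def by blast
  then show "\<exists>s\<in>sgen (\<Union>F). \<exists>r'. s * r = r' * x"
    using \<open>S \<in> F\<close> by (blast intro: sgen.base)
qed

lemma sgen_Union_right_ore:
  assumes "\<And>S. S \<in> F \<Longrightarrow> right_ore S" and "t \<in> sgen (\<Union>F)"
  shows "\<exists>s\<in>sgen (\<Union>F). \<exists>r'. r * s = t * r'"
proof (rule sgen_right_ore[OF _ assms(2)])
  fix x r assume "x \<in> \<Union>F"
  then obtain S where "S \<in> F" "x \<in> S" by blast
  then obtain s r' where "s \<in> S" "r * s = x * r'"
    using assms(1) unfolding right_ore_def by blast
  then show "\<exists>s\<in>sgen (\<Union>F). \<exists>r'. r * s = x * r'"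
    using \<open>S \<in> F\<close> by (blast intro: sgen.base)
qed

lemma sgen_Union_Den_at:
  assumes F: "F \<subseteq> Den_at \<aa>" "F \<noteq> {}"
  shows "sgen (\<Union>F) \<in> Den_at \<aa>"
proof -
  define T where "T = sgen (\<Union>F)"
  obtain S\<^sub>0 where "S\<^sub>0 \<in> F" using F by blast
  then have S\<^sub>0: "S\<^sub>0 \<in> Den_at \<aa>" "S\<^sub>0 \<subseteq> T"
    using F by (auto simp: T_def intro: sgen.base)
  have left_ann: "r \<in> \<aa>" if "t \<in> T" "t * r = 0" for t r
    using sgen_left_annihilator[OF S\<^sub>0(1) _ that[unfolded T_def]]
      F(1) Den_at_ass_iff_left by blast
  have right_ann: "r \<in> \<aa>" if "t \<in> T" "r * t = 0" for t r
    using sgen_right_annihilator[OF S\<^sub>0(1) _ that[unfolded T_def]]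
      F(1) Den_at_ass_iff_right by blast
  have "1 \<in> T" using S\<^sub>0 Den_at_mult_closed by (auto simp: mult_closed_def)
  moreover have "0 \<notin> T"
  proof
    assume "0 \<in> T"
    then have "1 \<in> \<aa>" using left_ann by fastforce
    then obtain s where "s \<in> S\<^sub>0" "s = 0" using Den_at_ass_iff_left[OF S\<^sub>0(1)] by auto
    then show False using S\<^sub>0(1) Den_at_mult_closed by (auto simp: mult_closed_def)
  qed
  ultimately have T_mult_closed: "mult_closed T"
    by (auto simp: mult_closed_def T_def intro: sgen.mult)
  have "left_den T" unfolding left_den_def left_ore_def
  proof (intro conjI T_mult_closed ballI allI impI)
    fix r s assume "s \<in> T"
    then show "\<exists>s'\<in>T. \<exists>r'. s' * r = r' * s"
      unfolding T_def using F(1) Den_at_left_ore by (intro sgen_Union_left_ore) auto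
  next
    fix r s assume "s \<in> T" "r * s = 0"
    then have "r \<in> \<aa>" by (rule right_ann)
    then show "\<exists>t\<in>T. t * r = 0" using Den_at_ass_iff_left[OF S\<^sub>0(1)] S\<^sub>0(2) by blast
  qed
  moreover have "right_den T" unfolding right_den_def right_ore_def
  proof (intro conjI T_mult_closed ballI allI impI)
    fix r s assume "s \<in> T"
    then show "\<exists>s'\<in>T. \<exists>r'. r * s' = s * r'"
      unfolding T_def using F(1) Den_at_right_ore by (intro sgen_Union_right_ore) auto
  next
    fix r s assume "s \<in> T" "s * r = 0"
    then have "r \<in> \<aa>" by (rule left_ann)
    then show "\<exists>t\<in>T. r * t = 0" using Den_at_ass_iff_right[OF S\<^sub>0(1)] S\<^sub>0(2) by blast
  qed
  moreover have "ass T = \<aa>"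
  proof
    show "ass T \<subseteq> \<aa>" using left_ann by (auto simp: ass_def)
    show "\<aa> \<subseteq> ass T"
      using Den_at_ass_iff_left[OF S\<^sub>0(1)] S\<^sub>0(2) by (fastforce simp: ass_def)
  qed
  ultimately show ?thesis by (simp add: T_def Den_at_def Den_def)
qed

lemma den_prod_Den_at:
  "S1 \<in> Den_at \<aa> \<Longrightarrow> S2 \<in> Den_at \<aa> \<Longrightarrow> den_prod S1 S2 \<in> Den_at \<aa>"
  using sgen_Union_Den_at[of "{S1, S2}"] by (simp add: den_prod_def)

interpretation den_prod: abel_semigroup "den_prod :: 'a::ring_1 set \<Rightarrow> 'a set \<Rightarrow> 'a set"
proof
  fix S1 S2 S3 :: "'a set"
  show "den_prod (den_prod S1 S2) S3 = den_prod S1 (den_prod S2 S3)"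
    unfolding den_prod_def
    using sgen_sgen_Un[of "S1 \<union> S2" S3] sgen_sgen_Un[of "S2 \<union> S3" S1]
    by (simp add: Un_ac)
  show "den_prod S1 S2 = den_prod S2 S1"
    by (simp add: den_prod_def Un_commute)
qed

lemma den_prod_mono_left: "S1 \<subseteq> S2 \<Longrightarrow> den_prod S1 S3 \<subseteq> den_prod S2 S3"
  unfolding den_prod_def by (intro sgen_mono) blast

lemma fam_gen_Den_at:
  "I \<noteq> {} \<Longrightarrow> (\<And>i. i \<in> I \<Longrightarrow> S i \<in> Den_at \<aa>) \<Longrightarrow> fam_gen I S \<in> Den_at \<aa>"
  using sgen_Union_Den_at[of "S ` I"] by (auto simp: fam_gen_def)

lemma fam_gen_upper: "i \<in> I \<Longrightarrow> S i \<subseteq> fam_gen I S"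
  by (auto simp: fam_gen_def intro: sgen.base)

lemma fam_gen_least:
  "T \<in> Den_at \<aa> \<Longrightarrow> (\<And>i. i \<in> I \<Longrightarrow> S i \<subseteq> T) \<Longrightarrow> fam_gen I S \<subseteq> T"
  unfolding fam_gen_def
  by (intro sgen_least) (auto intro: Den_at_mult)

lemma S_max_Den_at:
  assumes "Den_at \<aa> \<noteq> {}"
  shows "S_max \<aa> \<in> Den_at \<aa>"
proof -
  have "sgen (S_max \<aa>) \<in> Den_at \<aa>"
    using sgen_Union_Den_at[OF order_refl assms] by (simp add: S_max_def)
  moreover have "sgen (S_max \<aa>) = S_max \<aa>"
    using Union_upper[OF calculation] subset_sgen[of "S_max \<aa>"]
    unfolding S_max_def by (rule subset_antisym)
  ultimately show ?thesis by simp
qed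

lemma Den_at_subset_S_max: "S \<in> Den_at \<aa> \<Longrightarrow> S \<subseteq> S_max \<aa>"
  by (auto simp: S_max_def)

theorem theorem4p1:
  fixes \<aa> :: "'a::ring_1 set"
  assumes "\<aa> \<in> Ass"
  shows "(\<forall>S1\<in>Den_at \<aa>. \<forall>S2\<in>Den_at \<aa>. \<forall>S3\<in>Den_at \<aa>.
            den_prod S1 S2 \<in> Den_at \<aa>
          \<and> den_prod S1 S2 = den_prod S2 S1
          \<and> den_prod (den_prod S1 S2) S3 = den_prod S1 (den_prod S2 S3)
          \<and> (S1 \<subseteq> S2 \<longrightarrow> den_prod S1 S3 \<subseteq> den_prod S2 S3))
       \<and> (S_max \<aa> \<in> Den_at \<aa> \<and> (\<forall>S\<in>Den_at \<aa>. S \<subseteq> S_max \<aa>))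
       \<and> (\<forall>(I::'i set) (S::'i \<Rightarrow> 'a set). I \<noteq> {} \<longrightarrow> (\<forall>i\<in>I. S i \<in> Den_at \<aa>) \<longrightarrow>
            fam_gen I S \<in> Den_at \<aa>
          \<and> (\<forall>i\<in>I. S i \<subseteq> fam_gen I S)
          \<and> (\<forall>T\<in>Den_at \<aa>. (\<forall>i\<in>I. S i \<subseteq> T) \<longrightarrow> fam_gen I S \<subseteq> T))"
proof -
  have "Den_at \<aa> \<noteq> {}" using assms by (auto simp: Ass_def Den_at_def)
  then show ?thesis
    by (intro conjI ballI allI impI)
      (simp_all add: den_prod_Den_at den_prod.assoc den_prod.commute den_prod.left_commute
        den_prod_mono_left S_max_Den_at Den_at_subset_S_max fam_gen_Den_at fam_gen_upper fam_gen_least)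
qed

end
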